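(* Let $\Delta$ be a quasi-tree on $[n]$ of dimension $d-1$, and let $2\leq\ell\leq d-1$. For $k\ge1$ let $I_k\subset K[x_1,\ldots,x_n]$ be the ideal generated by the monomials $x_F=\prod_{i\in F}x_i$ with $F\subseteq[n]$, $|F|=k+1$, $F\notin\Delta$ (the facet ideal of $\overline{\mathrm{skel}_\Delta(k)}$). Then $I_\ell$ is generated by all squarefree monomials $u$ of degree $\ell+1$ that are divisible by some monomial generator of $I_1$.
   Context: A simplicial complex on $[n]$ is a collection of subsets of $[n]$ containing all singletons and closed under taking subsets; facets are maximal faces. A facet $F$ is a leaf if either it is the only facet, or there is a facet $G\neq F$ with $H\cap F\subseteq G\cap F$ for every facet $H\neq F$. A complex is a quasi-tree if its facets can be labeled $F_1,\ldots,F_m$ so that each $F_i$ is a leaf of the complex generated by $F_1,\ldots,F_i$. $\mathrm{skel}_\Delta(k)$ is the complex whose facets are the $k$-dimensional faces of $\Delta$, and $\bar\Gamma$ for a pure $(e-1)$-dimensional $\Gamma$ is the complex generated by the $e$-subsets of $[n]$ not in $\Gamma$. *)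

theory Defs
  imports Main "HOL-Library.Poly_Mapping"
begin

definition simplicial_complex :: "nat \<Rightarrow> nat set set \<Rightarrow> bool" where
  "simplicial_complex n \<Delta> \<longleftrightarrow> \<Delta> \<subseteq> Pow {1..n} \<and> (\<forall>i\<in>{1..n}. {i} \<in> \<Delta>)
     \<and> (\<forall>F\<in>\<Delta>. \<forall>G. G \<subseteq> F \<longrightarrow> G \<in> \<Delta>)"

definition facets :: "'v set set \<Rightarrow> 'v set set" where
  "facets \<Delta> = {F \<in> \<Delta>. \<forall>G\<in>\<Delta>. F \<subseteq> G \<longrightarrow> G = F}"

definition generated_complex :: "'v set set \<Rightarrow> 'v set set" where
  "generated_complex Fs = {G. \<exists>F\<in>Fs. G \<subseteq> F}"

definition is_leaf :: "'v set set \<Rightarrow> 'v set \<Rightarrow> bool" where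
  "is_leaf \<Delta> F \<longleftrightarrow> F \<in> facets \<Delta> \<and>
     (facets \<Delta> = {F} \<or>
      (\<exists>G\<in>facets \<Delta>. G \<noteq> F \<and> (\<forall>H\<in>facets \<Delta>. H \<noteq> F \<longrightarrow> H \<inter> F \<subseteq> G \<inter> F)))"

definition quasi_tree :: "'v set set \<Rightarrow> bool" where
  "quasi_tree \<Delta> \<longleftrightarrow> (\<exists>fs. distinct fs \<and> set fs = facets \<Delta> \<and>
     (\<forall>i < length fs. is_leaf (generated_complex (set (take (Suc i) fs))) (fs ! i)))"

definition has_dim :: "'v set set \<Rightarrow> int \<Rightarrow> bool" where
  "has_dim \<Delta> e \<longleftrightarrow> (\<exists>F\<in>\<Delta>. int (card F) - 1 = e) \<and> (\<forall>F\<in>\<Delta>. finite F \<and> int (card F) - 1 \<le> e)"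

type_synonym 'k mpoly = "(nat \<Rightarrow>\<^sub>0 nat) \<Rightarrow>\<^sub>0 'k"

definition is_ideal :: "'a::comm_ring_1 set \<Rightarrow> bool" where
  "is_ideal I \<longleftrightarrow> 0 \<in> I \<and> (\<forall>x\<in>I. \<forall>y\<in>I. x + y \<in> I) \<and> (\<forall>r. \<forall>x\<in>I. r * x \<in> I)"

definition ideal_gen :: "'a::comm_ring_1 set \<Rightarrow> 'a set" where
  "ideal_gen S = \<Inter> {I. is_ideal I \<and> S \<subseteq> I}"

definition monom :: "(nat \<Rightarrow>\<^sub>0 nat) \<Rightarrow> 'k::comm_ring_1 mpoly" where
  "monom \<alpha> = Poly_Mapping.single \<alpha> 1"

definition xF :: "nat set \<Rightarrow> 'k::comm_ring_1 mpoly" where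
  "xF F = monom (\<Sum>i\<in>F. Poly_Mapping.single i 1)"

definition I_ideal :: "nat \<Rightarrow> nat set set \<Rightarrow> nat \<Rightarrow> 'k::field mpoly set" where
  "I_ideal n \<Delta> k = ideal_gen {xF F | F. F \<subseteq> {1..n} \<and> card F = k + 1 \<and> F \<notin> \<Delta>}"

end

theory Submission
  imports Defs
begin

text \<open>
  A squarefree monomial of degree \<open>l + 1\<close> is \<open>x\<^sub>S\<close> for an \<open>(l + 1)\<close>-set \<open>S\<close>, and it is
  divisible by the generator of a non-edge iff \<open>S\<close> contains a non-edge. As faces are closed
  under subsets, it remains to see that a set of size at least two all of whose pairs are faces
  is itself a face, i.e. that a quasi-tree is a flag complex. This follows along the leaf order:
  if all pairs of \<open>S\<close> are faces once the leaf \<open>F\<close> is added and \<open>S \<not>\<subseteq> F\<close>, pick \<open>v \<in> S - F\<close>;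
  every \<open>x \<in> S \<inter> F\<close> lies together with \<open>v\<close> in an older facet, hence in the branch \<open>G\<close> of the
  leaf, so all pairs of \<open>S\<close> are already faces of the complex generated by the older facets.
\<close>

definition antichain :: "'v set set \<Rightarrow> bool" where
  "antichain A \<longleftrightarrow> (\<forall>X\<in>A. \<forall>Y\<in>A. X \<subseteq> Y \<longrightarrow> X = Y)"

definition flag_complex :: "'v set set \<Rightarrow> bool" where
  "flag_complex \<Delta> \<longleftrightarrow>
     (\<forall>S a b. a \<in> S \<longrightarrow> b \<in> S \<longrightarrow> a \<noteq> b \<longrightarrow> (\<forall>x\<in>S. \<forall>y\<in>S. x \<noteq> y \<longrightarrow> {x, y} \<in> \<Delta>) \<longrightarrow> S \<in> \<Delta>)"

lemma antichain_facets: "antichain (facets \<Delta>)"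
  unfolding antichain_def facets_def by blast

lemma antichain_subset: "antichain A \<Longrightarrow> B \<subseteq> A \<Longrightarrow> antichain B"
  unfolding antichain_def by blast

lemma facets_generated_complex:
  assumes "antichain A"
  shows "facets (generated_complex A) = A"
proof (intro equalityI subsetI)
  fix F assume "F \<in> facets (generated_complex A)"
  then have F: "F \<in> generated_complex A" "\<forall>G\<in>generated_complex A. F \<subseteq> G \<longrightarrow> G = F"
    unfolding facets_def by auto
  then obtain X where "X \<in> A" "F \<subseteq> X" unfolding generated_complex_def by auto
  moreover have "X \<in> generated_complex A" using \<open>X \<in> A\<close> unfolding generated_complex_def by auto
  ultimately show "F \<in> A" using F(2) by auto
next
  fix X assume X: "X \<in> A"
  have "G = X" if G: "G \<in> generated_complex A" "X \<subseteq> G" for G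
  proof -
    obtain Y where "Y \<in> A" "G \<subseteq> Y" using G(1) unfolding generated_complex_def by auto
    then have "X = Y" using assms X \<open>X \<subseteq> G\<close> unfolding antichain_def by auto
    then show "G = X" using \<open>G \<subseteq> Y\<close> \<open>X \<subseteq> G\<close> by auto
  qed
  moreover have "X \<in> generated_complex A" using X unfolding generated_complex_def by auto
  ultimately show "X \<in> facets (generated_complex A)" unfolding facets_def by auto
qed

lemma generated_complex_facets:
  assumes "finite \<Delta>" and closed: "\<forall>F\<in>\<Delta>. \<forall>G. G \<subseteq> F \<longrightarrow> G \<in> \<Delta>"
  shows "generated_complex (facets \<Delta>) = \<Delta>"
proof
  show "generated_complex (facets \<Delta>) \<subseteq> \<Delta>"
    using closed unfolding generated_complex_def facets_def by blast
  show "\<Delta> \<subseteq> generated_complex (facets \<Delta>)"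
  proof
    fix F assume "F \<in> \<Delta>"
    then obtain M where M: "M \<in> \<Delta>" "F \<subseteq> M" "\<forall>G\<in>\<Delta>. M \<subseteq> G \<longrightarrow> M = G"
      using finite_has_maximal2[OF \<open>finite \<Delta>\<close>] by blast
    then have "M \<in> facets \<Delta>" unfolding facets_def by blast
    then show "F \<in> generated_complex (facets \<Delta>)"
      using M(2) unfolding generated_complex_def by blast
  qed
qed

lemma flag_complex_empty: "flag_complex {}"
  unfolding flag_complex_def by blast

lemma is_leaf_generated_complexE:
  assumes "antichain (insert F T)"
    and "is_leaf (generated_complex (insert F T)) F"
    and "H \<in> T" "H \<noteq> F"
  obtains G where "G \<in> T" "\<forall>H\<in>T. H \<noteq> F \<longrightarrow> H \<inter> F \<subseteq> G"
proof -
  have "insert F T \<noteq> {F}" using assms(3,4) by blast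
  then have "\<exists>G\<in>insert F T. G \<noteq> F \<and> (\<forall>H\<in>insert F T. H \<noteq> F \<longrightarrow> H \<inter> F \<subseteq> G \<inter> F)"
    using assms(2) unfolding is_leaf_def facets_generated_complex[OF assms(1)] by simp
  then obtain G where G: "G \<in> T" "\<forall>H\<in>insert F T. H \<noteq> F \<longrightarrow> H \<inter> F \<subseteq> G \<inter> F"
    by auto
  show thesis
  proof (rule that)
    show "G \<in> T" by (rule G(1))
    show "\<forall>H\<in>T. H \<noteq> F \<longrightarrow> H \<inter> F \<subseteq> G" using G(2) by auto
  qed
qed

lemma flag_complex_insert_leaf:
  assumes antichain: "antichain (insert F T)"
    and leaf: "is_leaf (generated_complex (insert F T)) F"
    and flag: "flag_complex (generated_complex T)"
  shows "flag_complex (generated_complex (insert F T))"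
  unfolding flag_complex_def
proof (intro allI impI)
  fix S a b
  assume ab: "a \<in> S" "b \<in> S" "a \<noteq> b"
    and pairs: "\<forall>x\<in>S. \<forall>y\<in>S. x \<noteq> y \<longrightarrow> {x, y} \<in> generated_complex (insert F T)"
  show "S \<in> generated_complex (insert F T)"
  proof (cases "S \<subseteq> F")
    case True
    then show ?thesis unfolding generated_complex_def by blast
  next
    case False
    then obtain v where v: "v \<in> S" "v \<notin> F" by blast
    have old_facet: "\<exists>H\<in>T. {x, y} \<subseteq> H" if xy: "x \<in> S" "y \<in> S" "x \<noteq> y" "x \<notin> F" for x y
    proof -
      obtain H where "H \<in> insert F T" "{x, y} \<subseteq> H"
        using pairs xy(1-3) unfolding generated_complex_def by blast
      then show ?thesis using xy(4) by auto
    qed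
    obtain w where "w \<in> S" "w \<noteq> v" using ab by blast
    then obtain H where "H \<in> T" "v \<in> H" using old_facet[OF v(1)] v(2) by blast
    then obtain G where G: "G \<in> T" "\<forall>H\<in>T. H \<noteq> F \<longrightarrow> H \<inter> F \<subseteq> G"
      using is_leaf_generated_complexE[OF antichain leaf] v(2) by blast
    have in_branch: "x \<in> G" if x: "x \<in> S" "x \<in> F" for x
    proof -
      obtain H where "H \<in> T" "{v, x} \<subseteq> H" using old_facet[OF v(1) x(1)] v(2) x(2) by blast
      then show ?thesis using G(2) v(2) x(2) by blast
    qed
    have "\<exists>H\<in>T. {x, y} \<subseteq> H" if xy: "x \<in> S" "y \<in> S" "x \<noteq> y" for x y
    proof (cases "x \<in> F \<and> y \<in> F")
      case True
      then show ?thesis using G(1) in_branch xy by blast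
    next
      case False
      then show ?thesis using old_facet[OF xy] old_facet[OF xy(2,1)] xy(3) by (auto simp: insert_commute)
    qed
    then have "\<forall>x\<in>S. \<forall>y\<in>S. x \<noteq> y \<longrightarrow> {x, y} \<in> generated_complex T"
      unfolding generated_complex_def by blast
    then have "S \<in> generated_complex T"
      using flag ab unfolding flag_complex_def by blast
    then show ?thesis unfolding generated_complex_def by blast
  qed
qed

lemma flag_complex_quasi_tree:
  assumes "finite \<Delta>" and closed: "\<forall>F\<in>\<Delta>. \<forall>G. G \<subseteq> F \<longrightarrow> G \<in> \<Delta>"
    and "quasi_tree \<Delta>"
  shows "flag_complex \<Delta>"
proof -
  obtain fs where fs: "set fs = facets \<Delta>"
    and leaves: "\<forall>i < length fs. is_leaf (generated_complex (set (take (Suc i) fs))) (fs ! i)"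
    using \<open>quasi_tree \<Delta>\<close> unfolding quasi_tree_def by blast
  have "flag_complex (generated_complex (set (take m fs)))" if "m \<le> length fs" for m
    using that
  proof (induction m)
    case 0
    show ?case by (simp add: generated_complex_def flag_complex_empty)
  next
    case (Suc m)
    then have prefix: "set (take (Suc m) fs) = insert (fs ! m) (set (take m fs))"
      by (simp add: take_Suc_conv_app_nth)
    have "antichain (set (take (Suc m) fs))"
      using antichain_subset[OF antichain_facets] fs set_take_subset by metis
    then show ?case
      using flag_complex_insert_leaf Suc leaves prefix by (metis Suc_le_lessD less_imp_le)
  qed
  from this[of "length fs"] show ?thesis
    using fs generated_complex_facets[OF assms(1) closed] by simp
qed

lemma flag_complex_nonface_iff:
  assumes "flag_complex \<Delta>" and closed: "\<forall>F\<in>\<Delta>. \<forall>G. G \<subseteq> F \<longrightarrow> G \<in> \<Delta>"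
    and "finite S" "2 \<le> card S"
  shows "S \<notin> \<Delta> \<longleftrightarrow> (\<exists>F\<subseteq>S. card F = 2 \<and> F \<notin> \<Delta>)"
proof
  assume "S \<notin> \<Delta>"
  obtain a b where "a \<in> S" "b \<in> S" "a \<noteq> b"
    using assms(3,4) card_le_Suc0_iff_eq[of S] by fastforce
  then obtain x y where "x \<in> S" "y \<in> S" "x \<noteq> y" "{x, y} \<notin> \<Delta>"
    using \<open>flag_complex \<Delta>\<close> \<open>S \<notin> \<Delta>\<close> unfolding flag_complex_def by blast
  then show "\<exists>F\<subseteq>S. card F = 2 \<and> F \<notin> \<Delta>" by (intro exI[of _ "{x, y}"]) auto
qed (use closed in blast)

lemma quasi_tree_nonface_iff:
  assumes "simplicial_complex n \<Delta>" "quasi_tree \<Delta>" "G \<subseteq> {1..n}" "2 \<le> card G"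
  shows "G \<notin> \<Delta> \<longleftrightarrow> (\<exists>F\<subseteq>G. card F = 2 \<and> F \<notin> \<Delta>)"
proof -
  have closed: "\<forall>F\<in>\<Delta>. \<forall>G. G \<subseteq> F \<longrightarrow> G \<in> \<Delta>" and "finite \<Delta>"
    using assms(1) finite_subset[of \<Delta> "Pow {1..n}"] unfolding simplicial_complex_def by auto
  have "flag_complex \<Delta>" by (rule flag_complex_quasi_tree[OF \<open>finite \<Delta>\<close> closed assms(2)])
  moreover have "finite G" using assms(3) finite_subset by blast
  ultimately show ?thesis using flag_complex_nonface_iff closed assms(4) by blast
qed

definition indicator_exponent :: "nat set \<Rightarrow> nat \<Rightarrow>\<^sub>0 nat" where
  "indicator_exponent F = (\<Sum>i\<in>F. Poly_Mapping.single i 1)"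

lemma xF_eq_monom_indicator_exponent: "xF F = monom (indicator_exponent F)"
  unfolding xF_def indicator_exponent_def ..

lemma lookup_indicator_exponent:
  "finite F \<Longrightarrow> Poly_Mapping.lookup (indicator_exponent F) j = (if j \<in> F then 1 else 0)"
  unfolding indicator_exponent_def by (simp add: lookup_sum lookup_single when_def)

lemma keys_indicator_exponent: "finite F \<Longrightarrow> Poly_Mapping.keys (indicator_exponent F) = F"
  by (auto simp: in_keys_iff lookup_indicator_exponent split: if_splits)

lemma indicator_exponent_keys:
  assumes "\<forall>i. Poly_Mapping.lookup \<alpha> i \<le> (1::nat)"
  shows "indicator_exponent (Poly_Mapping.keys \<alpha>) = \<alpha>"
proof (rule poly_mapping_eqI)
  fix j
  have "Poly_Mapping.lookup \<alpha> j \<le> 1" using assms by blast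
  then show "Poly_Mapping.lookup (indicator_exponent (Poly_Mapping.keys \<alpha>)) j = Poly_Mapping.lookup \<alpha> j"
    by (auto simp: lookup_indicator_exponent in_keys_iff)
qed

lemma sum_lookup_squarefree:
  assumes "Poly_Mapping.keys \<alpha> \<subseteq> A" "finite A" "\<forall>i. Poly_Mapping.lookup \<alpha> i \<le> (1::nat)"
  shows "(\<Sum>i\<in>A. Poly_Mapping.lookup \<alpha> i) = card (Poly_Mapping.keys \<alpha>)"
proof -
  have "(\<Sum>i\<in>A. Poly_Mapping.lookup \<alpha> i) = (\<Sum>i\<in>Poly_Mapping.keys \<alpha>. Poly_Mapping.lookup \<alpha> i)"
    using assms(1,2) by (intro sum.mono_neutral_right) (auto simp: in_keys_iff)
  also have "\<dots> = (\<Sum>i\<in>Poly_Mapping.keys \<alpha>. 1)"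
  proof (rule sum.cong)
    fix i assume "i \<in> Poly_Mapping.keys \<alpha>"
    moreover have "Poly_Mapping.lookup \<alpha> i \<le> 1" using assms(3) by blast
    ultimately show "Poly_Mapping.lookup \<alpha> i = 1" by (simp add: in_keys_iff)
  qed simp
  finally show ?thesis by simp
qed

lemma xF_eq_mult_xF_diff:
  assumes "finite F" "F \<subseteq> G" "finite G"
  shows "(xF G :: 'k::comm_ring_1 mpoly) = xF F * xF (G - F)"
proof -
  have "indicator_exponent G = indicator_exponent F + indicator_exponent (G - F)"
    unfolding indicator_exponent_def using sum.subset_diff[OF assms(2,3)] by (simp add: add.commute)
  then show ?thesis by (simp add: xF_eq_monom_indicator_exponent monom_def mult_single)
qed

lemma xF_dvd_monom_imp_subset_keys:
  assumes "finite F" "(xF F :: 'k::comm_ring_1 mpoly) dvd monom \<alpha>"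
  shows "F \<subseteq> Poly_Mapping.keys \<alpha>"
proof
  fix j assume "j \<in> F"
  obtain p where p: "monom \<alpha> = Poly_Mapping.single (indicator_exponent F) (1::'k) * p"
    using assms(2) unfolding xF_eq_monom_indicator_exponent monom_def by (elim dvdE)
  have "\<alpha> \<in> Poly_Mapping.keys (Poly_Mapping.single (indicator_exponent F) (1::'k) * p)"
    unfolding p[symmetric] by (simp add: monom_def)
  then obtain \<gamma> where "\<alpha> = indicator_exponent F + \<gamma>"
    using keys_mult[of "Poly_Mapping.single (indicator_exponent F) (1::'k)" p] by auto
  then have "Poly_Mapping.lookup \<alpha> j \<noteq> 0"
    using \<open>j \<in> F\<close> assms(1) by (simp add: lookup_add lookup_indicator_exponent)
  then show "j \<in> Poly_Mapping.keys \<alpha>" by (simp add: in_keys_iff)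
qed

lemma xF_dvd_xF_iff:
  assumes "finite F" "finite G"
  shows "(xF F :: 'k::comm_ring_1 mpoly) dvd xF G \<longleftrightarrow> F \<subseteq> G"
proof
  assume "xF F dvd (xF G :: 'k mpoly)"
  then show "F \<subseteq> G"
    using xF_dvd_monom_imp_subset_keys[OF assms(1)] keys_indicator_exponent[OF assms(2)]
    unfolding xF_eq_monom_indicator_exponent[of G] by metis
next
  assume "F \<subseteq> G"
  then show "xF F dvd (xF G :: 'k mpoly)" using xF_eq_mult_xF_diff[OF assms(1) _ assms(2)] by (metis dvd_triv_left)
qed

lemma squarefree_monomials_eq_xF:
  fixes P :: "'k::comm_ring_1 mpoly \<Rightarrow> bool"
  assumes "finite A"
  shows "{monom \<alpha> :: 'k mpoly | \<alpha>. Poly_Mapping.keys \<alpha> \<subseteq> A \<and> (\<forall>i. Poly_Mapping.lookup \<alpha> i \<le> 1)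
             \<and> (\<Sum>i\<in>A. Poly_Mapping.lookup \<alpha> i) = k \<and> P (monom \<alpha>)}
       = {xF G | G. G \<subseteq> A \<and> card G = k \<and> P (xF G)}"
    (is "?monoms = ?xFs")
proof
  show "?monoms \<subseteq> ?xFs"
  proof
    fix m assume "m \<in> ?monoms"
    then obtain \<alpha> where \<alpha>: "m = monom \<alpha>" "Poly_Mapping.keys \<alpha> \<subseteq> A" "\<forall>i. Poly_Mapping.lookup \<alpha> i \<le> 1"
      "(\<Sum>i\<in>A. Poly_Mapping.lookup \<alpha> i) = k" "P (monom \<alpha>)"
      by blast
    have "m = xF (Poly_Mapping.keys \<alpha>)"
      unfolding \<alpha>(1) xF_eq_monom_indicator_exponent indicator_exponent_keys[OF \<alpha>(3)] ..
    moreover have "card (Poly_Mapping.keys \<alpha>) = k"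
      using sum_lookup_squarefree[OF \<alpha>(2) assms \<alpha>(3)] \<alpha>(4) by simp
    ultimately show "m \<in> ?xFs" using \<alpha>(1,2,5) by auto
  qed
  show "?xFs \<subseteq> ?monoms"
  proof
    fix m assume "m \<in> ?xFs"
    then obtain G where G: "m = xF G" "G \<subseteq> A" "card G = k" "P (xF G)" by blast
    have "finite G" using G(2) assms finite_subset by blast
    let ?\<alpha> = "indicator_exponent G"
    have keys: "Poly_Mapping.keys ?\<alpha> = G" and sqfree: "\<forall>i. Poly_Mapping.lookup ?\<alpha> i \<le> 1"
      using \<open>finite G\<close> by (simp_all add: keys_indicator_exponent lookup_indicator_exponent)
    have "(\<Sum>i\<in>A. Poly_Mapping.lookup ?\<alpha> i) = k"
      using sum_lookup_squarefree[of ?\<alpha> A] keys sqfree G(2,3) assms by simp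
    then show "m \<in> ?monoms"
      using G keys sqfree unfolding xF_eq_monom_indicator_exponent by blast
  qed
qed

theorem lemma4p3:
  fixes n d l :: nat and \<Delta> :: "nat set set"
  assumes "simplicial_complex n \<Delta>"
    and "quasi_tree \<Delta>"
    and "has_dim \<Delta> (int d - 1)"
    and "2 \<le> l" and "int l \<le> int d - 1"
  shows "(I_ideal n \<Delta> l :: 'k::field mpoly set) =
    ideal_gen {monom \<alpha> | \<alpha>. Poly_Mapping.keys \<alpha> \<subseteq> {1..n} \<and> (\<forall>i. Poly_Mapping.lookup \<alpha> i \<le> 1)
                 \<and> (\<Sum>i\<in>{1..n}. Poly_Mapping.lookup \<alpha> i) = l + 1
                 \<and> (\<exists>F. F \<subseteq> {1..n} \<and> card F = 2 \<and> F \<notin> \<Delta> \<and> xF F dvd (monom \<alpha> :: 'k mpoly))}"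
proof -
  have nonface_iff: "G \<notin> \<Delta> \<longleftrightarrow> (\<exists>F. F \<subseteq> {1..n} \<and> card F = 2 \<and> F \<notin> \<Delta> \<and> (xF F :: 'k mpoly) dvd xF G)"
    if G: "G \<subseteq> {1..n}" "card G = l + 1" for G
  proof -
    have "finite G" using G(1) finite_subset by blast
    have dvd_iff: "(xF F :: 'k mpoly) dvd xF G \<longleftrightarrow> F \<subseteq> G" if "card F = 2" for F
    proof -
      have "finite F" using that by (intro card_ge_0_finite) simp
      then show ?thesis using xF_dvd_xF_iff \<open>finite G\<close> by blast
    qed
    have "G \<notin> \<Delta> \<longleftrightarrow> (\<exists>F\<subseteq>G. card F = 2 \<and> F \<notin> \<Delta>)"
      using quasi_tree_nonface_iff[OF assms(1,2) G(1)] G(2) assms(4) by simp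
    also have "\<dots> \<longleftrightarrow> (\<exists>F. F \<subseteq> {1..n} \<and> card F = 2 \<and> F \<notin> \<Delta> \<and> (xF F :: 'k mpoly) dvd xF G)"
      by (intro ex_cong1) (use dvd_iff G(1) in auto)
    finally show ?thesis .
  qed
  then have "{xF F :: 'k mpoly | F. F \<subseteq> {1..n} \<and> card F = l + 1 \<and> F \<notin> \<Delta>}
      = {xF G | G. G \<subseteq> {1..n} \<and> card G = l + 1
           \<and> (\<exists>F. F \<subseteq> {1..n} \<and> card F = 2 \<and> F \<notin> \<Delta> \<and> (xF F :: 'k mpoly) dvd xF G)}"
    by (intro Collect_cong ex_cong1) (use nonface_iff in blast)
  also have "\<dots> = {monom \<alpha> | \<alpha>. Poly_Mapping.keys \<alpha> \<subseteq> {1..n} \<and> (\<forall>i. Poly_Mapping.lookup \<alpha> i \<le> 1)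
                 \<and> (\<Sum>i\<in>{1..n}. Poly_Mapping.lookup \<alpha> i) = l + 1
                 \<and> (\<exists>F. F \<subseteq> {1..n} \<and> card F = 2 \<and> F \<notin> \<Delta> \<and> xF F dvd (monom \<alpha> :: 'k mpoly))}"
    by (rule squarefree_monomials_eq_xF[OF finite_atLeastAtMost,
          where P = "\<lambda>m. \<exists>F. F \<subseteq> {1..n} \<and> card F = 2 \<and> F \<notin> \<Delta> \<and> xF F dvd m", symmetric])
  finally show ?thesis unfolding I_ideal_def by (rule arg_cong)
qed

end
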